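(* Let $A$ be a ring and $I\subset A$ an ideal, and let $\widetilde A:=A/A_{I\text{-tor}}$. If $A_{I\text{-tor}}$ contains no nonzero nilpotent element of $A$, then the commutative square of canonical projections $$\begin{array}{ccc}A&\to&\widetilde A\\ \downarrow&&\downarrow\\ (A/I)_{\mathrm{red}}&\to&(\widetilde A/I\widetilde A)_{\mathrm{red}}\end{array}$$ is cartesian; that is, $A_{I\text{-tor}}\cap\sqrt I=(0)$.
   Context: Rings are commutative with $1$. For a ring $A$ and ideal $I$, $A_{I\text{-tor}}$ is the ideal of $x\in A$ such that for every $a\in I$ there is $n>0$ with $a^nx=0$. *)

theory Defs
  imports "HOL-Algebra.Algebra"
begin

definition torsion_ideal :: "('a, 'b) ring_scheme \<Rightarrow> 'a set \<Rightarrow> 'a set" where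
  "torsion_ideal A I = {x \<in> carrier A. \<forall>a\<in>I. \<exists>n::nat. n > 0 \<and> a [^]\<^bsub>A\<^esub> n \<otimes>\<^bsub>A\<^esub> x = \<zero>\<^bsub>A\<^esub>}"

definition rad_ideal :: "('a, 'b) ring_scheme \<Rightarrow> 'a set \<Rightarrow> 'a set" where
  "rad_ideal A I = {x \<in> carrier A. \<exists>n::nat. x [^]\<^bsub>A\<^esub> n \<in> I}"

definition nilpotent_elem :: "('a, 'b) ring_scheme \<Rightarrow> 'a \<Rightarrow> bool" where
  "nilpotent_elem A x \<longleftrightarrow> x \<in> carrier A \<and> (\<exists>n::nat. x [^]\<^bsub>A\<^esub> n = \<zero>\<^bsub>A\<^esub>)"

end

theory Submission
  imports Defs
begin

lemma nilpotent_if_torsion_and_rad: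
  fixes A (structure)
  assumes "monoid A"
    and "x \<in> torsion_ideal A I" and "x \<in> rad_ideal A I"
  shows "nilpotent_elem A x"
proof -
  interpret monoid A by fact
  have x: "x \<in> carrier A"
    using assms(2) unfolding torsion_ideal_def by blast
  obtain n :: nat where "x [^] n \<in> I"
    using assms(3) unfolding rad_ideal_def by blast
  then obtain m :: nat where "(x [^] n) [^] m \<otimes> x = \<zero>"
    using assms(2) unfolding torsion_ideal_def by blast
  moreover have "(x [^] n) [^] m \<otimes> x = x [^] (n * m + 1)"
    using x by (simp add: nat_pow_pow)
  ultimately show ?thesis
    unfolding nilpotent_elem_def using x by metis
qed

lemma zero_in_torsion_ideal:
  assumes "ideal I A"
  shows "\<zero>\<^bsub>A\<^esub> \<in> torsion_ideal A I"
proof -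
  interpret ideal I A by fact
  show ?thesis
    unfolding torsion_ideal_def using a_subset by (auto intro!: exI[of _ "1::nat"])
qed

lemma zero_in_rad_ideal:
  assumes "ideal I A"
  shows "\<zero>\<^bsub>A\<^esub> \<in> rad_ideal A I"
proof -
  interpret ideal I A by fact
  show ?thesis
    unfolding rad_ideal_def by (auto intro!: exI[of _ "1::nat"])
qed

theorem lemma3p5:
  fixes A (structure) and I :: "'a set"
  assumes "cring A"
    and "ideal I A"
    and "\<forall>x\<in>torsion_ideal A I. nilpotent_elem A x \<longrightarrow> x = \<zero>\<^bsub>A\<^esub>"
  shows "torsion_ideal A I \<inter> rad_ideal A I = {\<zero>\<^bsub>A\<^esub>}"
proof -
  have monoid: "monoid A"
    using assms(1) by (simp add: cring.axioms(1) ring.is_monoid)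
  have "x = \<zero>" if "x \<in> torsion_ideal A I" and "x \<in> rad_ideal A I" for x
    using assms(3) that(1) nilpotent_if_torsion_and_rad[OF monoid that] by simp
  moreover have "\<zero> \<in> torsion_ideal A I \<inter> rad_ideal A I"
    using zero_in_torsion_ideal[OF assms(2)] zero_in_rad_ideal[OF assms(2)] by (rule IntI)
  ultimately show ?thesis
    by blast
qed

end
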